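(* Let $K$ be a field of characteristic $0$ and $\mathcal{H}$ a finite-dimensional associative $K$-algebra with $1$ which is split semisimple and symmetric with trace form $\tau\colon\mathcal{H}\to K$, and let $\dagger\colon\mathcal{H}\to\mathcal{H}$, $h\mapsto h^\dagger$, be a $K$-linear anti-involution. Assume $B_0$ is a $\dagger$-symmetric basis of $\mathcal{H}$. For a simple $\mathcal{H}$-module $E$ define $$\nu_E:=\frac{1}{c_E\dim E}\sum_{b\in B_0}\chi_E(b^2).$$ Then $\nu_E\in\{0,\pm1\}$, and: (a) $\nu_E=0$ if and only if $E\not\cong\hat E$; (b) $\nu_E=1$ if and only if $E\cong\hat E$ and there exists a non-degenerate symmetric $\mathcal{H}$-invariant bilinear form on $E$; (c) $\nu_E=-1$ if and only if $E\cong\hat E$ and there exists a non-degenerate alternating $\mathcal{H}$-invariant bilinear form on $E$. In particular $\nu_E$ does not depend on the choice of $B_0$.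
   Context: $\mathrm{Irr}(\mathcal{H})$ denotes the set of simple $\mathcal{H}$-modules up to isomorphism; $\chi_E(h)=\mathrm{trace}(h,E)$. The Schur elements $c_E\in K\setminus\{0\}$ are defined by $\tau=\sum_{E\in\mathrm{Irr}(\mathcal{H})}c_E^{-1}\chi_E$. The contragredient $\hat M$ of a finite-dimensional left $\mathcal{H}$-module $M$ is $\mathrm{Hom}_K(M,K)$ with $(h.f)(m)=f(h^\dagger.m)$. A bilinear form $(\,,)$ on $M$ is $\mathcal{H}$-invariant if $(h.m,m')=(m,h^\dagger.m')$ for all $h\in\mathcal{H}$, $m,m'\in M$. For a basis $B$ of $\mathcal{H}$, the dual basis $B^\vee=\{b^\vee\}$ is defined by $\tau(b'b^\vee)=\delta_{b,b'}$. A basis $B_0$ is $\dagger$-symmetric if $b^\dagger=b^\vee$ for all $b\in B_0$. *)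

theory Defs
  imports Main "Jordan_Normal_Form.Matrix" "Jordan_Normal_Form.Determinant"
begin

definition is_K_algebra :: "('k::field \<Rightarrow> 'h::ring_1 \<Rightarrow> 'h) \<Rightarrow> bool" where
  "is_K_algebra sc \<longleftrightarrow> vector_space sc \<and>
     (\<forall>a x y. sc a (x * y) = sc a x * y \<and> sc a (x * y) = x * sc a y)"

definition is_basis :: "('k::field \<Rightarrow> 'h::ring_1 \<Rightarrow> 'h) \<Rightarrow> 'h set \<Rightarrow> bool" where
  "is_basis sc B \<longleftrightarrow> \<not> module.dependent sc B \<and> module.span sc B = UNIV"

definition left_ideal :: "('k::field \<Rightarrow> 'h::ring_1 \<Rightarrow> 'h) \<Rightarrow> 'h set \<Rightarrow> bool" where
  "left_ideal sc L \<longleftrightarrow> 0 \<in> L \<and> (\<forall>x\<in>L. \<forall>y\<in>L. x + y \<in> L) \<and>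
     (\<forall>a. \<forall>x\<in>L. sc a x \<in> L) \<and> (\<forall>h. \<forall>x\<in>L. h * x \<in> L)"

definition semisimple_alg :: "('k::field \<Rightarrow> 'h::ring_1 \<Rightarrow> 'h) \<Rightarrow> bool" where
  "semisimple_alg sc \<longleftrightarrow> (\<forall>L. left_ideal sc L \<longrightarrow>
     (\<exists>L'. left_ideal sc L' \<and> L \<inter> L' = {0} \<and> {x + y | x y. x \<in> L \<and> y \<in> L'} = UNIV))"

section \<open>Finite-dimensional H-modules, in coordinates (matrix representations)\<close>

definition mat_trace :: "'a::comm_ring_1 mat \<Rightarrow> 'a" where
  "mat_trace A = (\<Sum>i<dim_row A. A $$ (i, i))"

definition is_rep :: "('k::field \<Rightarrow> 'h::ring_1 \<Rightarrow> 'h) \<Rightarrow> nat \<Rightarrow> ('h \<Rightarrow> 'k mat) \<Rightarrow> bool" where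
  "is_rep sc n \<rho> \<longleftrightarrow> (\<forall>h. \<rho> h \<in> carrier_mat n n) \<and> \<rho> 1 = 1\<^sub>m n \<and>
     (\<forall>x y. \<rho> (x * y) = \<rho> x * \<rho> y) \<and> (\<forall>x y. \<rho> (x + y) = \<rho> x + \<rho> y) \<and>
     (\<forall>a x. \<rho> (sc a x) = a \<cdot>\<^sub>m \<rho> x)"

definition invariant_subspace :: "nat \<Rightarrow> ('h \<Rightarrow> 'k::field mat) \<Rightarrow> 'k vec set \<Rightarrow> bool" where
  "invariant_subspace n \<rho> W \<longleftrightarrow> W \<subseteq> carrier_vec n \<and> 0\<^sub>v n \<in> W \<and>
     (\<forall>v\<in>W. \<forall>w\<in>W. v + w \<in> W) \<and> (\<forall>a. \<forall>v\<in>W. a \<cdot>\<^sub>v v \<in> W) \<and>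
     (\<forall>h. \<forall>v\<in>W. \<rho> h *\<^sub>v v \<in> W)"

definition simple_rep :: "('k::field \<Rightarrow> 'h::ring_1 \<Rightarrow> 'h) \<Rightarrow> nat \<Rightarrow> ('h \<Rightarrow> 'k mat) \<Rightarrow> bool" where
  "simple_rep sc n \<rho> \<longleftrightarrow> is_rep sc n \<rho> \<and> n > 0 \<and>
     (\<forall>W. invariant_subspace n \<rho> W \<longrightarrow> W = {0\<^sub>v n} \<or> W = carrier_vec n)"

definition rep_iso :: "nat \<Rightarrow> ('h \<Rightarrow> 'k::field mat) \<Rightarrow> nat \<Rightarrow> ('h \<Rightarrow> 'k mat) \<Rightarrow> bool" where
  "rep_iso n \<rho> m \<sigma> \<longleftrightarrow> n = m \<and>
     (\<exists>P \<in> carrier_mat n n. invertible_mat P \<and> (\<forall>h. P * \<rho> h = \<sigma> h * P))"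

definition split_alg :: "('k::field \<Rightarrow> 'h::ring_1 \<Rightarrow> 'h) \<Rightarrow> bool" where
  "split_alg sc \<longleftrightarrow> (\<forall>n \<rho>. simple_rep sc n \<rho> \<longrightarrow>
     (\<forall>A \<in> carrier_mat n n. (\<forall>h. A * \<rho> h = \<rho> h * A) \<longrightarrow> (\<exists>a. A = a \<cdot>\<^sub>m 1\<^sub>m n)))"

text \<open>Contragredient module Hom_K(K^n,K), written in the dual basis:
  (h.f)(m) = f(h^\<dagger>.m) gives the matrix transpose(\<rho>(h^\<dagger>)).\<close>
definition contragredient :: "('h \<Rightarrow> 'h) \<Rightarrow> ('h \<Rightarrow> 'k::field mat) \<Rightarrow> ('h \<Rightarrow> 'k mat)" where
  "contragredient dag \<rho> = (\<lambda>h. transpose_mat (\<rho> (dag h)))"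

definition bform :: "'k::field mat \<Rightarrow> 'k vec \<Rightarrow> 'k vec \<Rightarrow> 'k" where
  "bform M v w = v \<bullet> (M *\<^sub>v w)"

definition invariant_form :: "('h \<Rightarrow> 'h) \<Rightarrow> nat \<Rightarrow> ('h \<Rightarrow> 'k::field mat) \<Rightarrow> 'k mat \<Rightarrow> bool" where
  "invariant_form dag n \<rho> M \<longleftrightarrow> (\<forall>h. \<forall>v\<in>carrier_vec n. \<forall>w\<in>carrier_vec n.
      bform M (\<rho> h *\<^sub>v v) w = bform M v (\<rho> (dag h) *\<^sub>v w))"

definition nondegenerate_form :: "nat \<Rightarrow> 'k::field mat \<Rightarrow> bool" where
  "nondegenerate_form n M \<longleftrightarrow> (\<forall>v\<in>carrier_vec n.
      (\<forall>w\<in>carrier_vec n. bform M v w = 0) \<longrightarrow> v = 0\<^sub>v n)"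

definition symmetric_form :: "nat \<Rightarrow> 'k::field mat \<Rightarrow> bool" where
  "symmetric_form n M \<longleftrightarrow> (\<forall>v\<in>carrier_vec n. \<forall>w\<in>carrier_vec n. bform M v w = bform M w v)"

definition alternating_form :: "nat \<Rightarrow> 'k::field mat \<Rightarrow> bool" where
  "alternating_form n M \<longleftrightarrow> (\<forall>v\<in>carrier_vec n. bform M v v = 0)"

definition symmetrizing_trace :: "('k::field \<Rightarrow> 'h::ring_1 \<Rightarrow> 'h) \<Rightarrow> ('h \<Rightarrow> 'k) \<Rightarrow> bool" where
  "symmetrizing_trace sc \<tau> \<longleftrightarrow> Vector_Spaces.linear sc (*) \<tau> \<and>
     (\<forall>x y. \<tau> (x * y) = \<tau> (y * x)) \<and> (\<forall>x. (\<forall>y. \<tau> (x * y) = 0) \<longrightarrow> x = 0)"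

definition anti_involution :: "('k::field \<Rightarrow> 'h::ring_1 \<Rightarrow> 'h) \<Rightarrow> ('h \<Rightarrow> 'h) \<Rightarrow> bool" where
  "anti_involution sc dag \<longleftrightarrow> Vector_Spaces.linear sc sc dag \<and>
     (\<forall>x y. dag (x * y) = dag y * dag x) \<and> (\<forall>x. dag (dag x) = x)"

text \<open>B is \<dagger>-symmetric: b^\<dagger> = b^\<or>, i.e. \<tau>(b' b^\<dagger>) = \<delta>_{b,b'} (the defining property of
  the dual basis element b^\<or>).\<close>
definition dag_symmetric_basis ::
  "('k::field \<Rightarrow> 'h::ring_1 \<Rightarrow> 'h) \<Rightarrow> ('h \<Rightarrow> 'k) \<Rightarrow> ('h \<Rightarrow> 'h) \<Rightarrow> 'h set \<Rightarrow> bool" where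
  "dag_symmetric_basis sc \<tau> dag B \<longleftrightarrow> is_basis sc B \<and>
     (\<forall>b\<in>B. \<forall>b'\<in>B. \<tau> (b' * dag b) = (if b = b' then 1 else 0))"

definition nu :: "'h::ring_1 set \<Rightarrow> 'k::field \<Rightarrow> nat \<Rightarrow> ('h \<Rightarrow> 'k mat) \<Rightarrow> 'k" where
  "nu B c n \<rho> = (1 / (c * of_nat n)) * (\<Sum>b\<in>B. mat_trace (\<rho> (b * b)))"

end

theory Submission
  imports Defs
begin

(* Averaging X \<mapsto> \<Sum>_b \<rho>(b) X \<sigma>(b\<^sup>\<dagger>) over the \<dagger>-symmetric basis turns every matrix into a
   homomorphism of H-modules. Schur's lemma and the expansion of \<tau> by Schur elements then give the
   orthogonality relations \<Sum>_b \<rho>(b)_{kp} \<rho>(b\<^sup>\<dagger>)_{lq} = c_E \<delta>_{pl} \<delta>_{kq}, and zero between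
   non-isomorphic simple modules. The matrix of b\<^sup>\<dagger> on the contragredient E* is \<rho>(b)\<^sup>T, so
   \<Sum>_b \<chi>_E(b\<^sup>2) is such a sum between E and E*: it vanishes unless E \<cong> E*. If P : E \<rightarrow> E* is
   an isomorphism then so is P\<^sup>T; as H is split, P\<^sup>T = \<epsilon> P with \<epsilon> = \<plusminus>1, and orthogonality
   gives \<Sum>_b \<chi>_E(b\<^sup>2) = \<epsilon> c_E dim E. Finally, the isomorphisms E \<rightarrow> E* are exactly the Gram
   matrices of non-degenerate invariant forms, symmetric for \<epsilon> = 1 and alternating for \<epsilon> = -1. *)

lemma mult_unit_vec_index:
  assumes "(X :: 'a :: field mat) \<in> carrier_mat n m" "i < n" "j < m"
  shows "(X *\<^sub>v unit_vec m j) $ i = X $$ (i,j)"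
  using scalar_prod_right_unit[OF assms(3), of "row X i"] assms by simp

lemma index_eq_unit_vec_scalar_prod:
  assumes A: "(A :: 'a :: field mat) \<in> carrier_mat n n" and k: "k < n" and l: "l < n"
  shows "A $$ (k,l) = unit_vec n k \<bullet> (A *\<^sub>v unit_vec n l)"
  using mult_unit_vec_index[OF A k l] A k by simp

lemma mat_eq_zero_if_unit_vecs_in_kernel:
  assumes X: "(X :: 'a :: field mat) \<in> carrier_mat n m"
    and kernel: "\<And>j. j < m \<Longrightarrow> X *\<^sub>v unit_vec m j = 0\<^sub>v n"
  shows "X = 0\<^sub>m n m"
proof (rule eq_matI)
  fix i j assume "i < dim_row (0\<^sub>m n m)" "j < dim_col (0\<^sub>m n m)"
  hence ij: "i < n" "j < m" by auto
  show "X $$ (i,j) = 0\<^sub>m n m $$ (i,j)"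
    using mult_unit_vec_index[OF X ij] kernel[OF ij(2)] ij by simp
qed (use X in auto)

lemma vec_eq_zero_if_orthogonal_unit_vecs:
  assumes v: "(v :: 'a :: field vec) \<in> carrier_vec n"
    and orth: "\<And>k. k < n \<Longrightarrow> v \<bullet> unit_vec n k = 0"
  shows "v = 0\<^sub>v n"
proof (rule eq_vecI)
  fix i assume "i < dim_vec (0\<^sub>v n)"
  hence i: "i < n" by simp
  show "v $ i = 0\<^sub>v n $ i" using scalar_prod_right_unit[OF i, of v] orth[OF i] i by simp
qed (use v in simp)

lemma dim_le_if_mult_vec_inj:
  assumes X: "(X :: 'a :: field mat) \<in> carrier_mat n m"
    and inj: "\<And>v. v \<in> carrier_vec m \<Longrightarrow> X *\<^sub>v v = 0\<^sub>v n \<Longrightarrow> v = 0\<^sub>v m"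
  shows "m \<le> n"
proof (rule ccontr)
  assume "\<not> m \<le> n"
  hence nm: "n < m" by simp
  \<comment> \<open>pad X with zero rows to a square matrix; its last row vanishes, so it is singular\<close>
  define Y where "Y = mat m m (\<lambda>(i,j). if i < n then X $$ (i,j) else 0)"
  have Y: "Y \<in> carrier_mat m m" and YT: "transpose_mat Y \<in> carrier_mat m m"
    unfolding Y_def by simp_all
  have "transpose_mat Y *\<^sub>v unit_vec m (m - 1) = 0\<^sub>v m"
  proof (rule eq_vecI)
    fix i assume "i < dim_vec (0\<^sub>v m)"
    hence i: "i < m" by simp
    show "(transpose_mat Y *\<^sub>v unit_vec m (m - 1)) $ i = 0\<^sub>v m $ i"
      using mult_unit_vec_index[OF YT i] nm i unfolding Y_def by simp
  qed (use YT in auto)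
  moreover have "unit_vec m (m - 1) \<noteq> 0\<^sub>v m" using nm by simp
  ultimately have "det (transpose_mat Y) = 0"
    using det_0_iff_vec_prod_zero_field[OF YT] unit_vec_carrier by blast
  hence "det Y = 0" using det_transpose[OF Y] by simp
  then obtain v where v: "v \<in> carrier_vec m" "v \<noteq> 0\<^sub>v m" "Y *\<^sub>v v = 0\<^sub>v m"
    using det_0_iff_vec_prod_zero_field[OF Y] by blast
  have "X *\<^sub>v v = 0\<^sub>v n"
  proof (rule eq_vecI)
    fix i assume "i < dim_vec (0\<^sub>v n)"
    hence i: "i < n" by simp
    have "(X *\<^sub>v v) $ i = (Y *\<^sub>v v) $ i"
      using i nm X v(1) unfolding Y_def by (simp add: scalar_prod_def row_def)
    thus "(X *\<^sub>v v) $ i = 0\<^sub>v n $ i" using v(3) i nm by simp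
  qed (use X in auto)
  with inj v show False by auto
qed

lemma transpose_mult_vec_inj_if_surj:
  assumes X: "(X :: 'a :: field mat) \<in> carrier_mat n m"
    and surj: "\<And>u. u \<in> carrier_vec n \<Longrightarrow> \<exists>v\<in>carrier_vec m. X *\<^sub>v v = u"
    and v: "v \<in> carrier_vec n" and kernel: "transpose_mat X *\<^sub>v v = 0\<^sub>v m"
  shows "v = 0\<^sub>v n"
proof (rule vec_eq_zero_if_orthogonal_unit_vecs[OF v])
  fix k assume "k < n"
  obtain w where w: "w \<in> carrier_vec m" "X *\<^sub>v w = unit_vec n k"
    using surj[of "unit_vec n k"] by auto
  have "v \<bullet> unit_vec n k = (transpose_mat X *\<^sub>v v) \<bullet> w"
    using transpose_vec_mult_scalar[OF X w(1) v] w(2) by simp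
  thus "v \<bullet> unit_vec n k = 0" using kernel w by simp
qed

lemma dim_le_if_mult_vec_surj:
  assumes X: "(X :: 'a :: field mat) \<in> carrier_mat n m"
    and surj: "\<And>u. u \<in> carrier_vec n \<Longrightarrow> \<exists>v\<in>carrier_vec m. X *\<^sub>v v = u"
  shows "n \<le> m"
  using dim_le_if_mult_vec_inj[of "transpose_mat X" m n] transpose_mult_vec_inj_if_surj[OF X surj] X
  by auto

lemma det_nonzero_if_mult_vec_surj:
  assumes X: "(X :: 'a :: field mat) \<in> carrier_mat n n"
    and surj: "\<And>u. u \<in> carrier_vec n \<Longrightarrow> \<exists>v\<in>carrier_vec n. X *\<^sub>v v = u"
  shows "det X \<noteq> 0"
proof -
  have "det (transpose_mat X) \<noteq> 0"
  proof
    assume "det (transpose_mat X) = 0"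
    then obtain v where "v \<in> carrier_vec n" "v \<noteq> 0\<^sub>v n" "transpose_mat X *\<^sub>v v = 0\<^sub>v n"
      using det_0_iff_vec_prod_zero_field[of "transpose_mat X" n] X by auto
    with transpose_mult_vec_inj_if_surj[OF X surj] show False by blast
  qed
  thus ?thesis using det_transpose[OF X] by simp
qed

lemma inverse_mat_if_det_nonzero:
  assumes X: "(X :: 'a :: field mat) \<in> carrier_mat n n" and "det X \<noteq> 0"
  shows "\<exists>Y\<in>carrier_mat n n. X * Y = 1\<^sub>m n \<and> Y * X = 1\<^sub>m n"
  using det_non_zero_imp_unit[OF assms, of "()"] unfolding Units_def ring_mat_def by auto

lemma invertible_mat_if_det_nonzero:
  assumes X: "(X :: 'a :: field mat) \<in> carrier_mat n n" and "det X \<noteq> 0"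
  shows "invertible_mat X"
proof -
  obtain Y where "Y \<in> carrier_mat n n" "X * Y = 1\<^sub>m n" "Y * X = 1\<^sub>m n"
    using inverse_mat_if_det_nonzero[OF assms] by auto
  thus ?thesis unfolding invertible_mat_def inverts_mat_def square_mat.simps
    using X by (intro conjI exI[of _ Y]) auto
qed

lemma invertible_mat_inverse:
  assumes P: "(P :: 'a :: field mat) \<in> carrier_mat n n" and "invertible_mat P"
  shows "\<exists>Q\<in>carrier_mat n n. P * Q = 1\<^sub>m n \<and> Q * P = 1\<^sub>m n"
proof -
  obtain Q where Q: "P * Q = 1\<^sub>m (dim_row P)" "Q * P = 1\<^sub>m (dim_row Q)"
    using assms(2) unfolding invertible_mat_def inverts_mat_def by auto
  have "dim_col (P * Q) = n" using Q(1) P by simp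
  hence "dim_col Q = n" by simp
  moreover have "dim_col (Q * P) = n" using P by simp
  hence "dim_row Q = n" using Q(2) by (metis index_one_mat(3))
  ultimately show ?thesis using Q P by (intro bexI[of _ Q]) auto
qed

lemma mult_mult_index:
  assumes "(P :: 'a :: field mat) \<in> carrier_mat n n" "A \<in> carrier_mat n n" "Q \<in> carrier_mat n n"
    and "k < n" "l < n"
  shows "(P * A * Q) $$ (k,l) = (\<Sum>s=0..<n. \<Sum>r=0..<n. P $$ (k,r) * A $$ (r,s) * Q $$ (s,l))"
  using assms by (subst sum.swap) (simp add: scalar_prod_def sum_distrib_left mult.assoc)

lemma intertwiner_conj:
  assumes A: "(A :: 'a :: field mat) \<in> carrier_mat n n" and C: "C \<in> carrier_mat n n"
    and P: "P \<in> carrier_mat n n" and Q: "Q \<in> carrier_mat n n"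
    and PQ: "P * Q = 1\<^sub>m n" "Q * P = 1\<^sub>m n" and int: "P * A = C * P"
  shows "C = P * A * Q" and "A * Q = Q * C"
proof -
  have "P * A * Q = C * P * Q" unfolding int ..
  also have "\<dots> = C" using C P Q by (simp add: PQ(1))
  finally show "C = P * A * Q" by simp
  have "A * Q = Q * P * A * Q" unfolding PQ(2) using A Q by simp
  also have "\<dots> = Q * (P * A) * Q" using A P Q by (simp add: assoc_mult_mat[of _ n n _ n _ n])
  also have "\<dots> = Q * (C * P) * Q" unfolding int ..
  also have "\<dots> = Q * C * (P * Q)" using C P Q by (simp add: assoc_mult_mat[of _ n n _ n _ n])
  also have "\<dots> = Q * C" unfolding PQ(1) using C Q by simp
  finally show "A * Q = Q * C" .
qed

lemma smult_one_mat: "(1::'a::ring_1) \<cdot>\<^sub>m M = M"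
  by (intro eq_matI) auto

lemma transpose_eq_smult_sign:
  assumes P: "(P :: 'a :: field mat) \<in> carrier_mat n n" and nz: "P \<noteq> 0\<^sub>m n n"
    and T: "transpose_mat P = e \<cdot>\<^sub>m P"
  shows "e = 1 \<or> e = -1"
proof -
  have twice: "P $$ (k,l) = (e * e) * P $$ (k,l)" if "k < n" "l < n" for k l
  proof -
    have "P $$ (k,l) = transpose_mat P $$ (l,k)" using P that by simp
    also have "\<dots> = e * P $$ (l,k)" unfolding T using P that by simp
    also have "P $$ (l,k) = transpose_mat P $$ (k,l)" using P that by simp
    also have "\<dots> = e * P $$ (k,l)" unfolding T using P that by simp
    finally show ?thesis by simp
  qed
  have "\<exists>k l. k < n \<and> l < n \<and> P $$ (k,l) \<noteq> 0"
  proof (rule ccontr)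
    assume "\<not> ?thesis"
    hence "P = 0\<^sub>m n n" using P by (intro eq_matI) auto
    with nz show False ..
  qed
  with twice have "e * e = 1" by force
  thus ?thesis by (simp add: square_eq_1_iff)
qed

section \<open>Bilinear forms given by Gram matrices\<close>

lemma scalar_prod_mult_vec_transpose:
  assumes A: "(A :: 'a :: field mat) \<in> carrier_mat n n"
    and x: "x \<in> carrier_vec n" and z: "z \<in> carrier_vec n"
  shows "(A *\<^sub>v x) \<bullet> z = x \<bullet> (transpose_mat A *\<^sub>v z)"
proof -
  have "(A *\<^sub>v x) \<bullet> z = z \<bullet> (A *\<^sub>v x)" using A x z by (intro comm_scalar_prod) auto
  also have "\<dots> = (transpose_mat A *\<^sub>v z) \<bullet> x" using transpose_vec_mult_scalar[OF A x z] by simp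
  also have "\<dots> = x \<bullet> (transpose_mat A *\<^sub>v z)" using A x z by (intro comm_scalar_prod) auto
  finally show ?thesis .
qed

lemma nondegenerate_form_if_right_inverse:
  assumes P: "(P :: 'a :: field mat) \<in> carrier_mat n n"
    and Q: "Q \<in> carrier_mat n n" and PQ: "P * Q = 1\<^sub>m n"
  shows "nondegenerate_form n P"
  unfolding nondegenerate_form_def
proof (intro ballI impI)
  fix v :: "'a vec" assume v: "v \<in> carrier_vec n" and h: "\<forall>w\<in>carrier_vec n. bform P v w = 0"
  show "v = 0\<^sub>v n"
  proof (rule vec_eq_zero_if_orthogonal_unit_vecs[OF v])
    fix k assume "k < n"
    have "bform P v (Q *\<^sub>v unit_vec n k) = 0" using h Q by simp
    moreover have "P *\<^sub>v (Q *\<^sub>v unit_vec n k) = unit_vec n k"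
      using P Q PQ by (simp flip: assoc_mult_mat_vec)
    ultimately show "v \<bullet> unit_vec n k = 0" unfolding bform_def by simp
  qed
qed

lemma det_nonzero_if_nondegenerate_form:
  assumes M: "(M :: 'a :: field mat) \<in> carrier_mat n n" and nd: "nondegenerate_form n M"
  shows "det M \<noteq> 0"
proof
  assume "det M = 0"
  hence "det (transpose_mat M) = 0" using det_transpose[OF M] by simp
  then obtain v where v: "v \<in> carrier_vec n" "v \<noteq> 0\<^sub>v n" "transpose_mat M *\<^sub>v v = 0\<^sub>v n"
    using det_0_iff_vec_prod_zero_field[of "transpose_mat M" n] M by auto
  have "bform M v w = 0" if w: "w \<in> carrier_vec n" for w
    using transpose_vec_mult_scalar[OF M w v(1)] v(3) w unfolding bform_def by simp
  with nd v show False unfolding nondegenerate_form_def by auto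
qed

lemma symmetric_form_iff_transpose:
  assumes M: "(M :: 'a :: field mat) \<in> carrier_mat n n"
  shows "symmetric_form n M \<longleftrightarrow> transpose_mat M = M"
proof
  assume S: "symmetric_form n M"
  show "transpose_mat M = M"
  proof (rule eq_matI)
    fix k l assume "k < dim_row M" "l < dim_col M"
    hence kl: "k < n" "l < n" using M by auto
    have "M $$ (l,k) = bform M (unit_vec n l) (unit_vec n k)"
      unfolding bform_def by (rule index_eq_unit_vec_scalar_prod[OF M kl(2,1)])
    also have "\<dots> = bform M (unit_vec n k) (unit_vec n l)"
      using S unfolding symmetric_form_def by simp
    also have "\<dots> = M $$ (k,l)"
      unfolding bform_def by (rule index_eq_unit_vec_scalar_prod[OF M kl, symmetric])
    finally show "transpose_mat M $$ (k,l) = M $$ (k,l)" using kl M by simp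
  qed (use M in auto)
next
  assume T: "transpose_mat M = M"
  show "symmetric_form n M"
    unfolding symmetric_form_def bform_def
  proof (intro ballI)
    fix v w :: "'a vec" assume v: "v \<in> carrier_vec n" and w: "w \<in> carrier_vec n"
    have "v \<bullet> (M *\<^sub>v w) = (transpose_mat M *\<^sub>v v) \<bullet> w"
      using transpose_vec_mult_scalar[OF M w v] by simp
    also have "\<dots> = w \<bullet> (M *\<^sub>v v)" unfolding T using M v w by (intro comm_scalar_prod) auto
    finally show "v \<bullet> (M *\<^sub>v w) = w \<bullet> (M *\<^sub>v v)" .
  qed
qed

lemma transpose_eq_neg_if_alternating_form:
  assumes M: "(M :: 'a :: field mat) \<in> carrier_mat n n" and A: "alternating_form n M"
  shows "transpose_mat M = (-1) \<cdot>\<^sub>m M"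
proof (rule eq_matI)
  fix k l assume "k < dim_row ((-1) \<cdot>\<^sub>m M)" "l < dim_col ((-1) \<cdot>\<^sub>m M)"
  hence kl: "k < n" "l < n" using M by auto
  let ?ek = "unit_vec n k" and ?el = "unit_vec n l"
  have c: "?ek \<in> carrier_vec n" "?el \<in> carrier_vec n"
    "M *\<^sub>v ?ek \<in> carrier_vec n" "M *\<^sub>v ?el \<in> carrier_vec n"
    using M by auto
  \<comment> \<open>polarisation at \<open>e\<^sub>k + e\<^sub>l\<close>\<close>
  have "0 = bform M (?ek + ?el) (?ek + ?el)" using A c unfolding alternating_form_def by simp
  also have "\<dots> = ?ek \<bullet> (M *\<^sub>v ?ek) + ?ek \<bullet> (M *\<^sub>v ?el) + (?el \<bullet> (M *\<^sub>v ?ek) + ?el \<bullet> (M *\<^sub>v ?el))"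
    unfolding bform_def using c
    by (simp add: mult_add_distrib_mat_vec[OF M] add_scalar_prod_distrib[of _ n]
        scalar_prod_add_distrib[of _ n])
  also have "?ek \<bullet> (M *\<^sub>v ?ek) = 0"
    using A c unfolding alternating_form_def bform_def by simp
  also have "?el \<bullet> (M *\<^sub>v ?el) = 0"
    using A c unfolding alternating_form_def bform_def by simp
  also have "?ek \<bullet> (M *\<^sub>v ?el) = M $$ (k,l)"
    by (rule index_eq_unit_vec_scalar_prod[OF M kl, symmetric])
  also have "?el \<bullet> (M *\<^sub>v ?ek) = M $$ (l,k)"
    by (rule index_eq_unit_vec_scalar_prod[OF M kl(2,1), symmetric])
  finally have "M $$ (l,k) = - M $$ (k,l)" by (simp add: eq_neg_iff_add_eq_0 add.commute)
  thus "transpose_mat M $$ (k,l) = ((-1) \<cdot>\<^sub>m M) $$ (k,l)" using kl M by simp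
qed (use M in auto)

lemma alternating_form_if_transpose_eq_neg:
  assumes M: "(M :: 'a :: field_char_0 mat) \<in> carrier_mat n n" and T: "transpose_mat M = (-1) \<cdot>\<^sub>m M"
  shows "alternating_form n M"
  unfolding alternating_form_def bform_def
proof (intro ballI)
  fix v :: "'a vec" assume v: "v \<in> carrier_vec n"
  have "v \<bullet> (M *\<^sub>v v) = (transpose_mat M *\<^sub>v v) \<bullet> v"
    using transpose_vec_mult_scalar[OF M v v] by simp
  also have "transpose_mat M *\<^sub>v v = - (M *\<^sub>v v)"
    unfolding T using M v by (intro eq_vecI) (auto simp: scalar_prod_def sum_negf)
  also have "(- (M *\<^sub>v v)) \<bullet> v = - (v \<bullet> (M *\<^sub>v v))"
    using M v comm_scalar_prod[of "M *\<^sub>v v" n v] by simp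
  finally show "v \<bullet> (M *\<^sub>v v) = 0" by simp
qed

lemma alternating_form_iff_transpose:
  assumes "(M :: 'a :: field_char_0 mat) \<in> carrier_mat n n"
  shows "alternating_form n M \<longleftrightarrow> transpose_mat M = (-1) \<cdot>\<^sub>m M"
  using transpose_eq_neg_if_alternating_form[OF assms] alternating_form_if_transpose_eq_neg[OF assms]
  by blast

section \<open>Schur's lemma\<close>

lemma is_rep_carrier: "is_rep sc n \<rho> \<Longrightarrow> \<rho> h \<in> carrier_mat n n"
  unfolding is_rep_def by auto

lemma simple_rep_invariant_subspace:
  "simple_rep sc n \<rho> \<Longrightarrow> invariant_subspace n \<rho> W \<Longrightarrow> W = {0\<^sub>v n} \<or> W = carrier_vec n"
  unfolding simple_rep_def by blast

lemma invariant_subspace_intertwiner_image: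
  assumes \<rho>: "\<And>h. \<rho> h \<in> carrier_mat n n" and \<sigma>: "\<And>h. \<sigma> h \<in> carrier_mat m m"
    and X: "X \<in> carrier_mat n m" and int: "\<And>h. \<rho> h * X = X * \<sigma> h"
  shows "invariant_subspace n \<rho> ((\<lambda>v. X *\<^sub>v v) ` carrier_vec m)"
  unfolding invariant_subspace_def
proof (intro conjI ballI allI)
  show "(\<lambda>v. X *\<^sub>v v) ` carrier_vec m \<subseteq> carrier_vec n" using X by auto
  have "0\<^sub>v n = X *\<^sub>v 0\<^sub>v m" using X by (intro eq_vecI) auto
  thus "0\<^sub>v n \<in> (\<lambda>v. X *\<^sub>v v) ` carrier_vec m" by (rule image_eqI) simp
next
  fix v w assume "v \<in> (\<lambda>v. X *\<^sub>v v) ` carrier_vec m" "w \<in> (\<lambda>v. X *\<^sub>v v) ` carrier_vec m"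
  then obtain v' w' where "v' \<in> carrier_vec m" "w' \<in> carrier_vec m" "v = X *\<^sub>v v'" "w = X *\<^sub>v w'"
    by auto
  hence "v + w = X *\<^sub>v (v' + w')" and "v' + w' \<in> carrier_vec m"
    using mult_add_distrib_mat_vec[OF X] by simp_all
  thus "v + w \<in> (\<lambda>v. X *\<^sub>v v) ` carrier_vec m" by blast
next
  fix a v assume "v \<in> (\<lambda>v. X *\<^sub>v v) ` carrier_vec m"
  then obtain v' where "v' \<in> carrier_vec m" "v = X *\<^sub>v v'" by auto
  hence "a \<cdot>\<^sub>v v = X *\<^sub>v (a \<cdot>\<^sub>v v')" and "a \<cdot>\<^sub>v v' \<in> carrier_vec m"
    using mult_mat_vec[OF X] by simp_all
  thus "a \<cdot>\<^sub>v v \<in> (\<lambda>v. X *\<^sub>v v) ` carrier_vec m" by blast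
next
  fix h v assume "v \<in> (\<lambda>v. X *\<^sub>v v) ` carrier_vec m"
  then obtain v' where v': "v' \<in> carrier_vec m" "v = X *\<^sub>v v'" by auto
  have "\<rho> h *\<^sub>v v = (\<rho> h * X) *\<^sub>v v'" using v' X \<rho>[of h] by simp
  also have "\<dots> = X *\<^sub>v (\<sigma> h *\<^sub>v v')" unfolding int using v' X \<sigma>[of h] by simp
  finally have "\<rho> h *\<^sub>v v = X *\<^sub>v (\<sigma> h *\<^sub>v v')" .
  moreover have "\<sigma> h *\<^sub>v v' \<in> carrier_vec m" using v' \<sigma>[of h] by simp
  ultimately show "\<rho> h *\<^sub>v v \<in> (\<lambda>v. X *\<^sub>v v) ` carrier_vec m" by blast
qed

lemma invariant_subspace_intertwiner_kernel:
  assumes \<rho>: "\<And>h. \<rho> h \<in> carrier_mat n n" and \<sigma>: "\<And>h. \<sigma> h \<in> carrier_mat m m"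
    and X: "(X :: 'a :: field mat) \<in> carrier_mat n m" and int: "\<And>h. \<rho> h * X = X * \<sigma> h"
  shows "invariant_subspace m \<sigma> {v \<in> carrier_vec m. X *\<^sub>v v = 0\<^sub>v n}"
  unfolding invariant_subspace_def
proof (intro conjI ballI allI)
  show "{v \<in> carrier_vec m. X *\<^sub>v v = 0\<^sub>v n} \<subseteq> carrier_vec m" by auto
  have "X *\<^sub>v 0\<^sub>v m = 0\<^sub>v n" using X by (intro eq_vecI) auto
  thus "0\<^sub>v m \<in> {v \<in> carrier_vec m. X *\<^sub>v v = 0\<^sub>v n}" by simp
next
  fix v w assume "v \<in> {v \<in> carrier_vec m. X *\<^sub>v v = 0\<^sub>v n}" "w \<in> {v \<in> carrier_vec m. X *\<^sub>v v = 0\<^sub>v n}"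
  thus "v + w \<in> {v \<in> carrier_vec m. X *\<^sub>v v = 0\<^sub>v n}" by (simp add: mult_add_distrib_mat_vec[OF X])
next
  fix a v assume "v \<in> {v \<in> carrier_vec m. X *\<^sub>v v = 0\<^sub>v n}"
  moreover have "a \<cdot>\<^sub>v 0\<^sub>v n = (0\<^sub>v n :: 'a vec)" by (intro eq_vecI) auto
  ultimately show "a \<cdot>\<^sub>v v \<in> {v \<in> carrier_vec m. X *\<^sub>v v = 0\<^sub>v n}" by (simp add: mult_mat_vec[OF X])
next
  fix h v assume "v \<in> {v \<in> carrier_vec m. X *\<^sub>v v = 0\<^sub>v n}"
  hence v: "v \<in> carrier_vec m" "X *\<^sub>v v = 0\<^sub>v n" by auto
  have "X *\<^sub>v (\<sigma> h *\<^sub>v v) = (X * \<sigma> h) *\<^sub>v v" using v(1) X \<sigma>[of h] by simp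
  also have "\<dots> = \<rho> h *\<^sub>v (X *\<^sub>v v)" unfolding int[symmetric] using v(1) X \<rho>[of h] by simp
  also have "\<dots> = 0\<^sub>v n" unfolding v(2) using \<rho>[of h] by (intro eq_vecI) auto
  finally show "\<sigma> h *\<^sub>v v \<in> {v \<in> carrier_vec m. X *\<^sub>v v = 0\<^sub>v n}" using v(1) \<sigma>[of h] by simp
qed

lemma simple_rep_intertwiner_surj:
  assumes r: "simple_rep sc n \<rho>" and X: "X \<in> carrier_mat n m"
    and \<sigma>: "\<And>h. \<sigma> h \<in> carrier_mat m m"
    and int: "\<And>h. \<rho> h * X = X * \<sigma> h" and nz: "X \<noteq> 0\<^sub>m n m"
    and u: "u \<in> carrier_vec n"
  shows "\<exists>v\<in>carrier_vec m. X *\<^sub>v v = u"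
proof -
  let ?W = "(\<lambda>v. X *\<^sub>v v) ` carrier_vec m"
  have \<rho>: "\<rho> h \<in> carrier_mat n n" for h using r unfolding simple_rep_def is_rep_def by auto
  have "?W = {0\<^sub>v n} \<or> ?W = carrier_vec n"
    by (rule simple_rep_invariant_subspace[OF r invariant_subspace_intertwiner_image[OF \<rho> \<sigma> X int]])
  moreover have "?W \<noteq> {0\<^sub>v n}"
  proof
    assume W: "?W = {0\<^sub>v n}"
    have "X = 0\<^sub>m n m"
    proof (rule mat_eq_zero_if_unit_vecs_in_kernel[OF X])
      fix j assume "j < m"
      have "X *\<^sub>v unit_vec m j \<in> ?W" by (rule imageI) simp
      thus "X *\<^sub>v unit_vec m j = 0\<^sub>v n" unfolding W by simp
    qed
    with nz show False by simp
  qed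
  ultimately have "u \<in> ?W" using u by blast
  thus ?thesis by blast
qed

lemma simple_rep_intertwiner_inj:
  fixes sc :: "'k::field \<Rightarrow> 'h::ring_1 \<Rightarrow> 'h"
  assumes s: "simple_rep sc m \<sigma>" and X: "X \<in> carrier_mat n m"
    and \<rho>: "\<And>h. \<rho> h \<in> carrier_mat n n"
    and int: "\<And>h. \<rho> h * X = X * \<sigma> h" and nz: "X \<noteq> 0\<^sub>m n m"
    and v: "v \<in> carrier_vec m" and kernel: "X *\<^sub>v v = 0\<^sub>v n"
  shows "v = 0\<^sub>v m"
proof -
  let ?W = "{v \<in> carrier_vec m. X *\<^sub>v v = 0\<^sub>v n}"
  have \<sigma>: "\<sigma> h \<in> carrier_mat m m" for h using s unfolding simple_rep_def is_rep_def by auto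
  have "?W = {0\<^sub>v m} \<or> ?W = carrier_vec m"
    by (rule simple_rep_invariant_subspace[OF s invariant_subspace_intertwiner_kernel[OF \<rho> \<sigma> X int]])
  moreover have "?W \<noteq> carrier_vec m"
  proof
    assume W: "?W = carrier_vec m"
    have "X = 0\<^sub>m n m"
    proof (rule mat_eq_zero_if_unit_vecs_in_kernel[OF X])
      fix j assume "j < m"
      have "unit_vec m j \<in> ?W" unfolding W by simp
      thus "X *\<^sub>v unit_vec m j = 0\<^sub>v n" by blast
    qed
    with nz show False by simp
  qed
  moreover have "v \<in> ?W" using v kernel by simp
  ultimately show ?thesis by blast
qed

lemma nonzero_intertwiner_rep_iso:
  assumes r: "simple_rep sc n \<rho>" and X: "X \<in> carrier_mat n m"
    and \<sigma>: "\<And>h. \<sigma> h \<in> carrier_mat m m"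
    and int: "\<And>h. \<rho> h * X = X * \<sigma> h" and nz: "X \<noteq> 0\<^sub>m n m" and mn: "m \<le> n"
  shows "rep_iso m \<sigma> n \<rho>"
proof -
  have surj: "\<And>u. u \<in> carrier_vec n \<Longrightarrow> \<exists>v\<in>carrier_vec m. X *\<^sub>v v = u"
    by (rule simple_rep_intertwiner_surj[OF r X \<sigma> int nz])
  hence nm: "n = m" using dim_le_if_mult_vec_surj[OF X] mn by simp
  have X': "X \<in> carrier_mat m m" using X nm by simp
  have "invertible_mat X"
    using invertible_mat_if_det_nonzero[OF X'] det_nonzero_if_mult_vec_surj[OF X'] surj nm by simp
  thus ?thesis unfolding rep_iso_def using X' nm int by (auto intro!: bexI[of _ X])
qed

lemma rep_iso_sym:
  assumes \<rho>: "\<And>h. \<rho> h \<in> carrier_mat n n" and \<sigma>: "\<And>h. \<sigma> h \<in> carrier_mat m m"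
    and iso: "rep_iso n \<rho> m \<sigma>"
  shows "rep_iso m \<sigma> n \<rho>"
proof -
  obtain P where P: "P \<in> carrier_mat n n" "invertible_mat P" and int: "\<And>h. P * \<rho> h = \<sigma> h * P"
    and nm: "n = m" using iso unfolding rep_iso_def by auto
  obtain Q where Q: "Q \<in> carrier_mat n n" "P * Q = 1\<^sub>m n" "Q * P = 1\<^sub>m n"
    using invertible_mat_inverse[OF P] by auto
  have \<sigma>: "\<sigma> h \<in> carrier_mat n n" for h using \<sigma>[of h] nm by simp
  have "Q * \<sigma> h = \<rho> h * Q" for h
    using intertwiner_conj(2)[OF \<rho>[of h] \<sigma>[of h] P(1) Q int] by simp
  moreover have "invertible_mat Q" unfolding invertible_mat_def inverts_mat_def
    using P Q by (intro conjI exI[of _ P]) auto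
  moreover have "Q \<in> carrier_mat m m" using Q(1) nm by simp
  ultimately show ?thesis unfolding rep_iso_def using nm by blast
qed

section \<open>Algebras with a \<open>\<dagger>\<close>-symmetric basis\<close>

locale dag_symmetric_algebra =
  fixes sc :: "'k::field \<Rightarrow> 'h::ring_1 \<Rightarrow> 'h"
    and \<tau> :: "'h \<Rightarrow> 'k" and dag :: "'h \<Rightarrow> 'h" and B :: "'h set"
  assumes alg: "is_K_algebra sc"
    and trace: "symmetrizing_trace sc \<tau>"
    and dag: "anti_involution sc dag"
    and B_finite: "finite B" and B_dag_symmetric: "dag_symmetric_basis sc \<tau> dag B"
begin

lemma vector_space: "vector_space sc"
  using alg unfolding is_K_algebra_def by auto

lemma sc_zero_left: "sc 0 x = 0"
  using vector_space by (simp add: module.scale_zero_left module_iff_vector_space)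

lemma sc_mult_left: "sc a x * y = sc a (x * y)"
  using alg unfolding is_K_algebra_def by auto

lemma sc_mult_right: "x * sc a y = sc a (x * y)"
  using alg unfolding is_K_algebra_def by metis

lemma tau_add: "\<tau> (x + y) = \<tau> x + \<tau> y"
  and tau_sc: "\<tau> (sc a x) = a * \<tau> x"
  using trace unfolding symmetrizing_trace_def Vector_Spaces.linear_iff by auto

lemma tau_commute: "\<tau> (x * y) = \<tau> (y * x)"
  using trace unfolding symmetrizing_trace_def by auto

lemma tau_sum: "\<tau> (sum f S) = (\<Sum>s\<in>S. \<tau> (f s))"
proof (induction S rule: infinite_finite_induct)
  case (infinite A)
  thus ?case using tau_sc[of 0 0] sc_zero_left[of 0] by simp
next
  case empty
  show ?case using tau_sc[of 0 0] sc_zero_left[of 0] by simp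
qed (auto simp: tau_add)

lemma dag_add: "dag (x + y) = dag x + dag y"
  and dag_sc: "dag (sc a x) = sc a (dag x)"
  using dag unfolding anti_involution_def Vector_Spaces.linear_iff by auto

lemma dag_dag [simp]: "dag (dag x) = x"
  using dag unfolding anti_involution_def by auto

lemma dag_mult: "dag (x * y) = dag y * dag x"
  using dag unfolding anti_involution_def by auto

lemma dag_sum: "dag (sum f S) = (\<Sum>s\<in>S. dag (f s))"
proof (induction S rule: infinite_finite_induct)
  case (insert s S)
  thus ?case by (simp add: dag_add)
qed (use dag_add[of 0 0] in auto)

lemma dag_one: "dag 1 = 1"
  using dag_mult[of "dag 1" 1] by simp

lemma tau_dual_basis: "b \<in> B \<Longrightarrow> b' \<in> B \<Longrightarrow> \<tau> (b' * dag b) = (if b = b' then 1 else 0)"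
  using B_dag_symmetric unfolding dag_symmetric_basis_def by auto

lemma in_span_B: "\<exists>u. x = (\<Sum>v\<in>B. sc (u v) v)"
proof -
  have "module.span sc B = UNIV"
    using B_dag_symmetric unfolding dag_symmetric_basis_def is_basis_def by auto
  moreover have "Modules.module sc" using vector_space module_iff_vector_space by auto
  ultimately have "x \<in> range (\<lambda>u. \<Sum>v\<in>B. sc (u v) v)"
    using module.span_finite[OF _ B_finite] by auto
  thus ?thesis by auto
qed

lemma coefficient_eq_tau:
  assumes "b \<in> B"
  shows "\<tau> ((\<Sum>v\<in>B. sc (u v) v) * dag b) = u b"
proof -
  have "\<tau> ((\<Sum>v\<in>B. sc (u v) v) * dag b) = (\<Sum>v\<in>B. u v * \<tau> (v * dag b))"
    unfolding sum_distrib_right tau_sum by (simp add: sc_mult_left tau_sc)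
  also have "\<dots> = (\<Sum>v\<in>B. if v = b then u v else 0)"
    by (rule sum.cong) (auto simp: tau_dual_basis assms)
  finally show ?thesis using assms B_finite by simp
qed

lemma dual_basis_expansion: "x = (\<Sum>b\<in>B. sc (\<tau> (x * dag b)) b)"
proof -
  obtain u where u: "x = (\<Sum>v\<in>B. sc (u v) v)" using in_span_B by auto
  have "(\<Sum>b\<in>B. sc (\<tau> (x * dag b)) b) = (\<Sum>v\<in>B. sc (u v) v)"
    by (intro sum.cong) (auto simp: u coefficient_eq_tau simp del: u[symmetric])
  with u show ?thesis by simp
qed

lemma dual_basis_expansion_dag: "x = (\<Sum>b\<in>B. sc (\<tau> (b * x)) (dag b))"
proof -
  obtain u where u: "dag x = (\<Sum>v\<in>B. sc (u v) v)" using in_span_B by auto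
  have x: "x = (\<Sum>v\<in>B. sc (u v) (dag v))"
    using arg_cong[OF u, of dag] by (simp add: dag_sum dag_sc)
  have "\<tau> (b * x) = u b" if b: "b \<in> B" for b
  proof -
    have "\<tau> (b * x) = (\<Sum>v\<in>B. u v * \<tau> (b * dag v))"
      unfolding x sum_distrib_left tau_sum by (simp add: sc_mult_right tau_sc)
    also have "\<dots> = (\<Sum>v\<in>B. if v = b then u v else 0)"
      by (rule sum.cong) (auto simp: tau_dual_basis b)
    finally show ?thesis using b B_finite by simp
  qed
  hence "(\<Sum>b\<in>B. sc (\<tau> (b * x)) (dag b)) = (\<Sum>v\<in>B. sc (u v) (dag v))" by (intro sum.cong) auto
  with x show ?thesis by simp
qed

lemma is_rep_add: "is_rep sc n \<rho> \<Longrightarrow> \<rho> (x + y) = \<rho> x + \<rho> y"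
  and is_rep_mult: "is_rep sc n \<rho> \<Longrightarrow> \<rho> (x * y) = \<rho> x * \<rho> y"
  and is_rep_one: "is_rep sc n \<rho> \<Longrightarrow> \<rho> 1 = 1\<^sub>m n"
  unfolding is_rep_def by auto

context
  fixes n \<rho> k l
  assumes rep: "is_rep sc n \<rho>" and k: "k < n" and l: "l < n"
begin

lemma is_rep_sc_index: "\<rho> (sc a x) $$ (k,l) = a * \<rho> x $$ (k,l)"
proof -
  have "\<rho> (sc a x) = a \<cdot>\<^sub>m \<rho> x" using rep unfolding is_rep_def by auto
  thus ?thesis using is_rep_carrier[OF rep, of x] k l by simp
qed

lemma is_rep_sum_index: "\<rho> (sum f S) $$ (k,l) = (\<Sum>s\<in>S. \<rho> (f s) $$ (k,l))"
proof (induction S rule: infinite_finite_induct)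
  case (insert s S)
  thus ?case
    using is_rep_add[OF rep] is_rep_carrier[OF rep, of "f s"] is_rep_carrier[OF rep, of "sum f S"] k l
    by simp
qed (use is_rep_sc_index[of 0 0] sc_zero_left[of 0] in simp_all)

lemma is_rep_lincomb_index:
  "\<rho> (\<Sum>s\<in>S. sc (f s) (g s)) $$ (k,l) = (\<Sum>s\<in>S. f s * \<rho> (g s) $$ (k,l))"
  by (simp add: is_rep_sum_index is_rep_sc_index)

lemma is_rep_mult_index: "\<rho> (x * y) $$ (k,l) = (\<Sum>r=0..<n. \<rho> x $$ (k,r) * \<rho> y $$ (r,l))"
  using is_rep_carrier[OF rep, of x] is_rep_carrier[OF rep, of y] k l
  by (simp add: is_rep_mult[OF rep] scalar_prod_def)

end

lemma is_rep_contragredient: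
  assumes r: "is_rep sc n \<rho>"
  shows "is_rep sc n (contragredient dag \<rho>)"
  unfolding is_rep_def contragredient_def
proof (intro conjI allI)
  have c: "\<rho> x \<in> carrier_mat n n" for x by (rule is_rep_carrier[OF r])
  show "transpose_mat (\<rho> (dag h)) \<in> carrier_mat n n" for h using c[of "dag h"] by simp
  show "transpose_mat (\<rho> (dag 1)) = 1\<^sub>m n" using is_rep_one[OF r] dag_one by simp
  show "transpose_mat (\<rho> (dag (x * y))) = transpose_mat (\<rho> (dag x)) * transpose_mat (\<rho> (dag y))" for x y
    using transpose_mult[OF c c] by (simp add: dag_mult is_rep_mult[OF r])
  show "transpose_mat (\<rho> (dag (x + y))) = transpose_mat (\<rho> (dag x)) + transpose_mat (\<rho> (dag y))" for x y
    using transpose_add[OF c c] by (simp add: dag_add is_rep_add[OF r])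
  show "transpose_mat (\<rho> (dag (sc a x))) = a \<cdot>\<^sub>m transpose_mat (\<rho> (dag x))" for a x
  proof -
    have "\<rho> (dag (sc a x)) = a \<cdot>\<^sub>m \<rho> (dag x)" using r unfolding is_rep_def by (simp only: dag_sc)
    thus ?thesis using c[of "dag x"] by (intro eq_matI) auto
  qed
qed

lemma contragredient_dag_index:
  assumes "is_rep sc n \<rho>" "k < n" "l < n"
  shows "contragredient dag \<rho> (dag b) $$ (k,l) = \<rho> b $$ (l,k)"
  using is_rep_carrier[OF assms(1), of b] assms(2,3) unfolding contragredient_def by simp

lemma sum_trace_square:
  assumes r: "is_rep sc n \<rho>"
  shows "(\<Sum>b\<in>B. mat_trace (\<rho> (b * b))) = (\<Sum>k<n. \<Sum>l<n. \<Sum>b\<in>B. \<rho> b $$ (k,l) * \<rho> b $$ (l,k))"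
proof -
  have "mat_trace (\<rho> (b * b)) = (\<Sum>k<n. \<Sum>l<n. \<rho> b $$ (k,l) * \<rho> b $$ (l,k))" for b
    unfolding mat_trace_def using is_rep_carrier[OF r, of "b * b"]
    by (simp add: is_rep_mult_index[OF r] atLeast0LessThan)
  hence "(\<Sum>b\<in>B. mat_trace (\<rho> (b * b))) = (\<Sum>b\<in>B. \<Sum>k<n. \<Sum>l<n. \<rho> b $$ (k,l) * \<rho> b $$ (l,k))"
    by simp
  also have "\<dots> = (\<Sum>k<n. \<Sum>l<n. \<Sum>b\<in>B. \<rho> b $$ (k,l) * \<rho> b $$ (l,k))"
    by (subst sum.swap) (intro sum.cong refl sum.swap)
  finally show ?thesis .
qed

text \<open>The \<open>(k,q)\<close>-entry of \<open>\<Sum>\<^sub>b \<rho>(b) E\<^sub>p\<^sub>l \<sigma>(b\<^sup>\<dagger>)\<close>, where \<open>E\<^sub>p\<^sub>l\<close> is a matrix unit.\<close>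
definition avg :: "('h \<Rightarrow> 'k mat) \<Rightarrow> ('h \<Rightarrow> 'k mat) \<Rightarrow> nat \<Rightarrow> nat \<Rightarrow> nat \<Rightarrow> nat \<Rightarrow> 'k" where
  "avg \<rho> \<sigma> k p l q = (\<Sum>b\<in>B. \<rho> b $$ (k,p) * \<sigma> (dag b) $$ (l,q))"

text \<open>Both sides equal \<open>\<Sum>\<^sub>b \<Sum>\<^sub>b\<^sub>' \<tau>(h b b'\<^sup>\<dagger>) \<rho>(b')\<^sub>k\<^sub>p \<sigma>(b\<^sup>\<dagger>)\<^sub>l\<^sub>q\<close>, by the two dual basis expansions
  of \<open>h b\<close> and of \<open>b\<^sup>\<dagger> h\<close>.\<close>
lemma avg_intertwines_index:
  assumes r: "is_rep sc n \<rho>" and s: "is_rep sc m \<sigma>"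
    and k: "k < n" and p: "p < n" and l: "l < m" and q: "q < m"
  shows "(\<Sum>r=0..<n. \<rho> h $$ (k,r) * avg \<rho> \<sigma> r p l q) = (\<Sum>r=0..<m. avg \<rho> \<sigma> k p l r * \<sigma> h $$ (r,q))"
proof -
  have "(\<Sum>r=0..<n. \<rho> h $$ (k,r) * avg \<rho> \<sigma> r p l q)
     = (\<Sum>b\<in>B. \<rho> (h * b) $$ (k,p) * \<sigma> (dag b) $$ (l,q))"
    unfolding avg_def sum_distrib_left sum_distrib_right is_rep_mult_index[OF r k p]
    by (subst sum.swap) (simp add: ac_simps)
  also have "\<dots> = (\<Sum>b\<in>B. \<Sum>b'\<in>B. \<tau> (h * b * dag b') * \<rho> b' $$ (k,p) * \<sigma> (dag b) $$ (l,q))"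
    by (subst dual_basis_expansion[of "h * _"])
      (simp add: is_rep_lincomb_index[OF r k p] sum_distrib_right)
  finally have L: "(\<Sum>r=0..<n. \<rho> h $$ (k,r) * avg \<rho> \<sigma> r p l q) = \<dots>" .
  have "(\<Sum>r=0..<m. avg \<rho> \<sigma> k p l r * \<sigma> h $$ (r,q))
     = (\<Sum>b\<in>B. \<rho> b $$ (k,p) * \<sigma> (dag b * h) $$ (l,q))"
    unfolding avg_def sum_distrib_left sum_distrib_right is_rep_mult_index[OF s l q]
    by (subst sum.swap) (simp add: ac_simps)
  also have "\<dots> = (\<Sum>b\<in>B. \<Sum>b'\<in>B. \<tau> (b' * (dag b * h)) * \<rho> b $$ (k,p) * \<sigma> (dag b') $$ (l,q))"
    by (subst dual_basis_expansion_dag[of "dag _ * h"])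
      (simp add: is_rep_lincomb_index[OF s l q] sum_distrib_left ac_simps)
  also have "\<dots> = (\<Sum>b\<in>B. \<Sum>b'\<in>B. \<tau> (h * b * dag b') * \<rho> b' $$ (k,p) * \<sigma> (dag b) $$ (l,q))"
    using tau_commute[of h] by (subst sum.swap) (simp add: mult.assoc)
  finally show ?thesis using L by simp
qed

lemma avg_intertwines:
  assumes r: "is_rep sc n \<rho>" and s: "is_rep sc m \<sigma>" and p: "p < n" and l: "l < m"
  shows "\<rho> h * mat n m (\<lambda>(k,q). avg \<rho> \<sigma> k p l q) = mat n m (\<lambda>(k,q). avg \<rho> \<sigma> k p l q) * \<sigma> h"
proof (rule eq_matI)
  have c: "\<rho> h \<in> carrier_mat n n" "\<sigma> h \<in> carrier_mat m m"
    using is_rep_carrier r s by auto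
  fix i j assume "i < dim_row (mat n m (\<lambda>(k,q). avg \<rho> \<sigma> k p l q) * \<sigma> h)"
    "j < dim_col (mat n m (\<lambda>(k,q). avg \<rho> \<sigma> k p l q) * \<sigma> h)"
  hence ij: "i < n" "j < m" using c by auto
  show "(\<rho> h * mat n m (\<lambda>(k,q). avg \<rho> \<sigma> k p l q)) $$ (i,j)
      = (mat n m (\<lambda>(k,q). avg \<rho> \<sigma> k p l q) * \<sigma> h) $$ (i,j)"
    using avg_intertwines_index[OF r s ij(1) p l ij(2)] c ij by (simp add: scalar_prod_def)
qed (use is_rep_carrier[OF r, of h] is_rep_carrier[OF s, of h] in auto)

lemma intertwiner_if_invariant_form:
  assumes r: "is_rep sc n \<rho>" and M: "M \<in> carrier_mat n n" and inv: "invariant_form dag n \<rho> M"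
  shows "M * \<rho> h = contragredient dag \<rho> h * M"
proof (rule eq_matI)
  have c: "\<rho> x \<in> carrier_mat n n" for x by (rule is_rep_carrier[OF r])
  fix k l assume "k < dim_row (contragredient dag \<rho> h * M)" "l < dim_col (contragredient dag \<rho> h * M)"
  hence kl: "k < n" "l < n" using M c[of "dag h"] unfolding contragredient_def by auto
  let ?ek = "unit_vec n k" and ?el = "unit_vec n l"
  have "(M * \<rho> h) $$ (k,l) = bform M ?ek (\<rho> (dag (dag h)) *\<^sub>v ?el)"
    using index_eq_unit_vec_scalar_prod[of "M * \<rho> h", OF _ kl] M c[of h]
    unfolding bform_def by simp
  also have "\<dots> = bform M (\<rho> (dag h) *\<^sub>v ?ek) ?el"
    using inv unfolding invariant_form_def by simp
  also have "\<dots> = ?ek \<bullet> ((contragredient dag \<rho> h * M) *\<^sub>v ?el)"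
    unfolding bform_def contragredient_def
    using scalar_prod_mult_vec_transpose[OF c, of ?ek "M *\<^sub>v ?el"] M c[of "dag h"] by simp
  also have "\<dots> = (contragredient dag \<rho> h * M) $$ (k,l)"
    using index_eq_unit_vec_scalar_prod[of "contragredient dag \<rho> h * M", OF _ kl] M c[of "dag h"]
    unfolding contragredient_def by simp
  finally show "(M * \<rho> h) $$ (k,l) = (contragredient dag \<rho> h * M) $$ (k,l)" .
qed (use M is_rep_carrier[OF r, of "dag h"] is_rep_carrier[OF r, of h] in \<open>auto simp: contragredient_def\<close>)

lemma invariant_form_if_intertwiner:
  assumes r: "is_rep sc n \<rho>" and M: "M \<in> carrier_mat n n"
    and int: "\<And>h. M * \<rho> h = contragredient dag \<rho> h * M"
  shows "invariant_form dag n \<rho> M"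
  unfolding invariant_form_def bform_def
proof (intro allI ballI)
  have c: "\<rho> x \<in> carrier_mat n n" for x by (rule is_rep_carrier[OF r])
  fix h and v w :: "'k vec" assume v: "v \<in> carrier_vec n" and w: "w \<in> carrier_vec n"
  have "v \<bullet> (M *\<^sub>v (\<rho> (dag h) *\<^sub>v w)) = v \<bullet> ((M * \<rho> (dag h)) *\<^sub>v w)"
    using M c[of "dag h"] w by simp
  also have "M * \<rho> (dag h) = transpose_mat (\<rho> h) * M"
    using int unfolding contragredient_def by simp
  also have "v \<bullet> ((transpose_mat (\<rho> h) * M) *\<^sub>v w) = v \<bullet> (transpose_mat (\<rho> h) *\<^sub>v (M *\<^sub>v w))"
    using M c[of h] w by simp
  also have "\<dots> = (\<rho> h *\<^sub>v v) \<bullet> (M *\<^sub>v w)"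
    using scalar_prod_mult_vec_transpose[OF c v, of "M *\<^sub>v w"] M w by simp
  finally show "(\<rho> h *\<^sub>v v) \<bullet> (M *\<^sub>v w) = v \<bullet> (M *\<^sub>v (\<rho> (dag h) *\<^sub>v w))" by simp
qed

lemma invariant_form_iff_intertwiner:
  assumes "is_rep sc n \<rho>" and "M \<in> carrier_mat n n"
  shows "invariant_form dag n \<rho> M \<longleftrightarrow> (\<forall>h. M * \<rho> h = contragredient dag \<rho> h * M)"
  using intertwiner_if_invariant_form[OF assms] invariant_form_if_intertwiner[OF assms] by blast

end

section \<open>Schur orthogonality\<close>

locale schur_setting = dag_symmetric_algebra sc \<tau> dag B
  for sc :: "'k::field_char_0 \<Rightarrow> 'h::ring_1 \<Rightarrow> 'h" and \<tau> dag B +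
  fixes I :: "'i set" and d :: "'i \<Rightarrow> nat" and \<rho> :: "'i \<Rightarrow> 'h \<Rightarrow> 'k mat" and c :: "'i \<Rightarrow> 'k"
  assumes split: "split_alg sc"
    and Irr_simple: "\<And>j. j \<in> I \<Longrightarrow> simple_rep sc (d j) (\<rho> j)"
    and Irr_distinct: "\<And>j k. j \<in> I \<Longrightarrow> k \<in> I \<Longrightarrow> j \<noteq> k \<Longrightarrow> \<not> rep_iso (d j) (\<rho> j) (d k) (\<rho> k)"
    and Irr_finite: "finite I"
    and schur_nz: "\<And>j. j \<in> I \<Longrightarrow> c j \<noteq> 0"
    and schur: "\<And>h. \<tau> h = (\<Sum>j\<in>I. mat_trace (\<rho> j h) / c j)"
begin

lemma Irr_rep: "j \<in> I \<Longrightarrow> is_rep sc (d j) (\<rho> j)"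
  using Irr_simple unfolding simple_rep_def by auto

lemma Irr_carrier: "j \<in> I \<Longrightarrow> \<rho> j h \<in> carrier_mat (d j) (d j)"
  using is_rep_carrier[OF Irr_rep] .

lemma Irr_dim_pos: "j \<in> I \<Longrightarrow> 0 < d j"
  using Irr_simple unfolding simple_rep_def by auto

lemma avg_eq_0_if_ne:
  assumes i: "i \<in> I" and j: "j \<in> I" and ij: "i \<noteq> j"
    and k: "k < d i" and p: "p < d i" and l: "l < d j" and q: "q < d j"
  shows "avg (\<rho> i) (\<rho> j) k p l q = 0"
proof -
  define X where "X = mat (d i) (d j) (\<lambda>(k,q). avg (\<rho> i) (\<rho> j) k p l q)"
  have X: "X \<in> carrier_mat (d i) (d j)" unfolding X_def by simp
  have int: "\<And>h. \<rho> i h * X = X * \<rho> j h"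
    unfolding X_def by (rule avg_intertwines[OF Irr_rep[OF i] Irr_rep[OF j] p l])
  have "X = 0\<^sub>m (d i) (d j)"
  proof (rule ccontr)
    assume nz: "X \<noteq> 0\<^sub>m (d i) (d j)"
    have "d j \<le> d i"
      using dim_le_if_mult_vec_inj[OF X]
        simple_rep_intertwiner_inj[OF Irr_simple[OF j] X Irr_carrier[OF i] int nz] by blast
    hence "rep_iso (d j) (\<rho> j) (d i) (\<rho> i)"
      using nonzero_intertwiner_rep_iso[OF Irr_simple[OF i] X Irr_carrier[OF j] int nz] by blast
    thus False using Irr_distinct[OF j i] ij by auto
  qed
  thus ?thesis using k q unfolding X_def by (metis index_mat(1) index_zero_mat(1) old.prod.case)
qed

lemma avg_diagonal:
  assumes i: "i \<in> I" and k: "k < d i" and p: "p < d i" and l: "l < d i" and q: "q < d i"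
  shows "avg (\<rho> i) (\<rho> i) k p l q = (if k = q then avg (\<rho> i) (\<rho> i) 0 p l 0 else 0)"
proof -
  define X where "X = mat (d i) (d i) (\<lambda>(k,q). avg (\<rho> i) (\<rho> i) k p l q)"
  have X: "X \<in> carrier_mat (d i) (d i)" unfolding X_def by simp
  have "\<And>h. X * \<rho> i h = \<rho> i h * X"
    unfolding X_def by (rule avg_intertwines[OF Irr_rep[OF i] Irr_rep[OF i] p l, symmetric])
  then obtain a where a: "X = a \<cdot>\<^sub>m 1\<^sub>m (d i)"
    using split Irr_simple[OF i] X unfolding split_alg_def by blast
  have "X $$ (k,q) = (if k = q then a else 0)" "X $$ (0,0) = a" using a k q by auto
  thus ?thesis unfolding X_def using k q by simp
qed

lemma sum_tau_dag_eq_avg: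
  assumes i: "i \<in> I" and k: "k < d i" and p: "p < d i"
  shows "(\<Sum>b\<in>B. \<tau> (dag b) * \<rho> i b $$ (k,p)) = (\<Sum>j\<in>I. (\<Sum>l<d j. avg (\<rho> i) (\<rho> j) k p l l) / c j)"
proof -
  have "mat_trace (\<rho> j h) = (\<Sum>l<d j. \<rho> j h $$ (l,l))" if "j \<in> I" for j h
    using Irr_carrier[OF that, of h] unfolding mat_trace_def by simp
  hence tau: "\<tau> h = (\<Sum>j\<in>I. (\<Sum>l<d j. \<rho> j h $$ (l,l)) / c j)" for h
    unfolding schur by (intro sum.cong) auto
  have "(\<Sum>b\<in>B. \<tau> (dag b) * \<rho> i b $$ (k,p))
      = (\<Sum>b\<in>B. \<Sum>j\<in>I. \<Sum>l<d j. \<rho> i b $$ (k,p) * \<rho> j (dag b) $$ (l,l) / c j)"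
    unfolding tau by (simp add: sum_distrib_right sum_distrib_left sum_divide_distrib ac_simps)
  also have "\<dots> = (\<Sum>j\<in>I. \<Sum>l<d j. \<Sum>b\<in>B. \<rho> i b $$ (k,p) * \<rho> j (dag b) $$ (l,l) / c j)"
    by (subst sum.swap) (intro sum.cong refl sum.swap)
  also have "\<dots> = (\<Sum>j\<in>I. (\<Sum>l<d j. avg (\<rho> i) (\<rho> j) k p l l) / c j)"
    unfolding avg_def by (simp add: sum_divide_distrib)
  finally show ?thesis .
qed

text \<open>Expanding \<open>1 = \<Sum>\<^sub>b \<tau>(b\<^sup>\<dagger>) b\<close> in \<open>\<rho>\<^sub>i\<close> and \<open>\<tau>\<close> by Schur elements leaves only the diagonal
  terms \<open>j = i\<close>, \<open>l = k\<close>; this determines the scalar of \<open>avg_diagonal\<close>.\<close>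
lemma schur_orthogonality:
  assumes i: "i \<in> I" and k: "k < d i" and p: "p < d i" and l: "l < d i" and q: "q < d i"
  shows "avg (\<rho> i) (\<rho> i) k p l q = (if p = l \<and> k = q then c i else 0)"
proof -
  let ?a = "\<lambda>p l. avg (\<rho> i) (\<rho> i) 0 p l 0"
  have "?a p k = (if k = p then c i else 0)" if k: "k < d i" and p: "p < d i" for k p
  proof -
    have "(if k = p then 1 else 0) = \<rho> i (\<Sum>b\<in>B. sc (\<tau> (1 * dag b)) b) $$ (k,p)"
      using is_rep_one[OF Irr_rep[OF i]] dual_basis_expansion[of 1] k p by simp
    also have "\<dots> = (\<Sum>j\<in>I. (\<Sum>l<d j. avg (\<rho> i) (\<rho> j) k p l l) / c j)"
      using sum_tau_dag_eq_avg[OF i k p] by (simp add: is_rep_lincomb_index[OF Irr_rep[OF i] k p])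
    also have "\<dots> = (\<Sum>l<d i. avg (\<rho> i) (\<rho> i) k p l l) / c i"
      using avg_eq_0_if_ne[OF i _ _ k p] by (subst sum.remove[OF Irr_finite i]) (auto intro!: sum.neutral)
    also have "(\<Sum>l<d i. avg (\<rho> i) (\<rho> i) k p l l) = (\<Sum>l<d i. if k = l then ?a p l else 0)"
      by (rule sum.cong) (auto simp: avg_diagonal[OF i k p])
    also have "\<dots> = ?a p k" using k by simp
    finally have "(if k = p then 1 else 0) = ?a p k / c i" .
    thus ?thesis using schur_nz[OF i] by (auto simp: field_simps split: if_splits)
  qed
  thus ?thesis using avg_diagonal[OF i k p l q] l p by auto
qed

end

section \<open>The Frobenius--Schur indicator\<close>

context dag_symmetric_algebra
begin

lemma transpose_intertwiner_contragredient:
  assumes r: "is_rep sc n \<rho>" and P: "P \<in> carrier_mat n n"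
    and int: "\<And>h. P * \<rho> h = contragredient dag \<rho> h * P"
  shows "transpose_mat P * \<rho> h = contragredient dag \<rho> h * transpose_mat P"
proof -
  have c: "\<rho> x \<in> carrier_mat n n" for x by (rule is_rep_carrier[OF r])
  have "P * \<rho> (dag h) = transpose_mat (\<rho> h) * P"
    using int[of "dag h"] unfolding contragredient_def by simp
  hence "transpose_mat (P * \<rho> (dag h)) = transpose_mat (transpose_mat (\<rho> h) * P)" by simp
  thus ?thesis unfolding contragredient_def
    using transpose_mult[OF P c] transpose_mult[OF _ P, of "transpose_mat (\<rho> h)"] c[of h] by simp
qed

end

context schur_setting
begin

lemma avg_contragredient_eq_0:
  assumes i: "i \<in> I" and not_self_dual: "\<not> rep_iso (d i) (\<rho> i) (d i) (contragredient dag (\<rho> i))"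
    and k: "k < d i" and p: "p < d i" and l: "l < d i" and q: "q < d i"
  shows "avg (\<rho> i) (contragredient dag (\<rho> i)) k p l q = 0"
proof -
  let ?n = "d i" and ?\<rho>' = "contragredient dag (\<rho> i)"
  have r': "is_rep sc ?n ?\<rho>'" by (rule is_rep_contragredient[OF Irr_rep[OF i]])
  define X where "X = mat ?n ?n (\<lambda>(k,q). avg (\<rho> i) ?\<rho>' k p l q)"
  have X: "X \<in> carrier_mat ?n ?n" unfolding X_def by simp
  have int: "\<And>h. \<rho> i h * X = X * ?\<rho>' h"
    unfolding X_def by (rule avg_intertwines[OF Irr_rep[OF i] r' p l])
  have "X = 0\<^sub>m ?n ?n"
  proof (rule ccontr)
    assume "X \<noteq> 0\<^sub>m ?n ?n"
    hence "rep_iso ?n ?\<rho>' ?n (\<rho> i)"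
      using nonzero_intertwiner_rep_iso[OF Irr_simple[OF i] X is_rep_carrier[OF r'] int] by blast
    hence "rep_iso ?n (\<rho> i) ?n ?\<rho>'"
      by (rule rep_iso_sym[OF is_rep_carrier[OF r'] Irr_carrier[OF i]])
    with not_self_dual show False by simp
  qed
  thus ?thesis using k q unfolding X_def by (metis index_mat(1) index_zero_mat(1) old.prod.case)
qed

lemma sum_trace_square_eq_0:
  assumes i: "i \<in> I" and not_self_dual: "\<not> rep_iso (d i) (\<rho> i) (d i) (contragredient dag (\<rho> i))"
  shows "(\<Sum>b\<in>B. mat_trace (\<rho> i (b * b))) = 0"
proof -
  have "(\<Sum>b\<in>B. \<rho> i b $$ (k,l) * \<rho> i b $$ (l,k)) = 0" if k: "k < d i" and l: "l < d i" for k l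
    using avg_contragredient_eq_0[OF i not_self_dual k l k l]
    unfolding avg_def by (simp add: contragredient_dag_index[OF Irr_rep[OF i] k l])
  thus ?thesis unfolding sum_trace_square[OF Irr_rep[OF i]] by simp
qed

text \<open>Writing \<open>\<rho>(b)\<^sub>l\<^sub>k = \<rho>\<^sup>*(b\<^sup>\<dagger>)\<^sub>k\<^sub>l = (P \<rho>(b\<^sup>\<dagger>) Q)\<^sub>k\<^sub>l\<close> with \<open>\<rho>\<^sup>*\<close> the contragredient, Schur
  orthogonality evaluates the sum.\<close>
lemma sum_index_product_self_dual:
  assumes i: "i \<in> I" and P: "P \<in> carrier_mat (d i) (d i)" and Q: "Q \<in> carrier_mat (d i) (d i)"
    and PQ: "P * Q = 1\<^sub>m (d i)" "Q * P = 1\<^sub>m (d i)"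
    and int: "\<And>h. P * \<rho> i h = contragredient dag (\<rho> i) h * P"
    and k: "k < d i" and l: "l < d i"
  shows "(\<Sum>b\<in>B. \<rho> i b $$ (k,l) * \<rho> i b $$ (l,k)) = c i * P $$ (k,l) * Q $$ (k,l)"
proof -
  let ?n = "d i"
  have r: "is_rep sc ?n (\<rho> i)" by (rule Irr_rep[OF i])
  have e: "\<rho> i b $$ (l,k) = (\<Sum>s=0..<?n. \<Sum>r=0..<?n. P $$ (k,r) * \<rho> i (dag b) $$ (r,s) * Q $$ (s,l))" for b
    using contragredient_dag_index[OF r k l, of b]
      intertwiner_conj(1)[OF Irr_carrier[OF i] is_rep_carrier[OF is_rep_contragredient[OF r]] P Q PQ int]
      mult_mult_index[OF P Irr_carrier[OF i] Q k l] by simp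
  have "(\<Sum>b\<in>B. \<rho> i b $$ (k,l) * \<rho> i b $$ (l,k))
      = (\<Sum>b\<in>B. \<Sum>s=0..<?n. \<Sum>r=0..<?n. P $$ (k,r) * Q $$ (s,l) * (\<rho> i b $$ (k,l) * \<rho> i (dag b) $$ (r,s)))"
    unfolding e sum_distrib_left by (simp add: ac_simps)
  also have "\<dots> = (\<Sum>s=0..<?n. \<Sum>r=0..<?n. \<Sum>b\<in>B. P $$ (k,r) * Q $$ (s,l) * (\<rho> i b $$ (k,l) * \<rho> i (dag b) $$ (r,s)))"
    by (subst sum.swap) (intro sum.cong refl sum.swap)
  also have "\<dots> = (\<Sum>s=0..<?n. \<Sum>r=0..<?n. P $$ (k,r) * Q $$ (s,l) * avg (\<rho> i) (\<rho> i) k l r s)"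
    unfolding avg_def by (simp add: sum_distrib_left)
  also have "\<dots> = (\<Sum>s=0..<?n. if k = s then P $$ (k,l) * Q $$ (s,l) * c i else 0)"
    by (intro sum.cong refl) (auto simp: schur_orthogonality[OF i k l] l if_distrib cong: if_cong)
  also have "\<dots> = c i * P $$ (k,l) * Q $$ (k,l)" using k by simp
  finally show ?thesis .
qed

text \<open>Since \<open>H\<close> is split, the intertwiner \<open>Q P\<^sup>T\<close> of \<open>E\<close> is a scalar \<open>\<epsilon>\<close>, i.e. \<open>P\<^sup>T = \<epsilon> P\<close>.\<close>
lemma self_dual_intertwiner_sign:
  assumes i: "i \<in> I" and P: "P \<in> carrier_mat (d i) (d i)" and Q: "Q \<in> carrier_mat (d i) (d i)"
    and PQ: "P * Q = 1\<^sub>m (d i)" "Q * P = 1\<^sub>m (d i)"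
    and int: "\<And>h. P * \<rho> i h = contragredient dag (\<rho> i) h * P"
  shows "\<exists>\<epsilon>. (\<epsilon> = 1 \<or> \<epsilon> = -1) \<and> transpose_mat P = \<epsilon> \<cdot>\<^sub>m P"
proof -
  let ?n = "d i" and ?\<rho>' = "contragredient dag (\<rho> i)"
  have r: "is_rep sc ?n (\<rho> i)" by (rule Irr_rep[OF i])
  have c: "\<rho> i h \<in> carrier_mat ?n ?n" "?\<rho>' h \<in> carrier_mat ?n ?n" for h
    using Irr_carrier[OF i] is_rep_carrier[OF is_rep_contragredient[OF r]] by auto
  have PT: "transpose_mat P \<in> carrier_mat ?n ?n" using P by simp
  define Z where "Z = Q * transpose_mat P"
  have Z: "Z \<in> carrier_mat ?n ?n" unfolding Z_def using Q PT by simp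
  have "Z * \<rho> i h = \<rho> i h * Z" for h
  proof -
    have "\<rho> i h * Z = (\<rho> i h * Q) * transpose_mat P"
      unfolding Z_def by (rule assoc_mult_mat[OF c(1) Q PT, symmetric])
    also have "\<dots> = Q * (?\<rho>' h * transpose_mat P)"
      unfolding intertwiner_conj(2)[OF c P Q PQ int] by (rule assoc_mult_mat[OF Q c(2) PT])
    also have "\<dots> = Z * \<rho> i h"
      unfolding Z_def transpose_intertwiner_contragredient[OF r P int, symmetric]
      by (rule assoc_mult_mat[OF Q PT c(1), symmetric])
    finally show ?thesis by (rule sym)
  qed
  then obtain \<epsilon> where \<epsilon>: "Z = \<epsilon> \<cdot>\<^sub>m 1\<^sub>m ?n"
    using split Irr_simple[OF i] Z unfolding split_alg_def by blast
  have "transpose_mat P = (P * Q) * transpose_mat P" unfolding PQ(1) using P by simp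
  also have "\<dots> = P * Z" unfolding Z_def using P Q by simp
  also have "\<dots> = \<epsilon> \<cdot>\<^sub>m P" unfolding \<epsilon> using P by (simp add: mult_smult_distrib[OF P one_carrier_mat])
  finally have T: "transpose_mat P = \<epsilon> \<cdot>\<^sub>m P" .
  have "P \<noteq> 0\<^sub>m ?n ?n"
  proof
    assume "P = 0\<^sub>m ?n ?n"
    hence "P * Q = 0\<^sub>m ?n ?n" using Q by simp
    hence "(1\<^sub>m ?n :: 'k mat) $$ (0,0) = 0" using PQ(1) Irr_dim_pos[OF i] by simp
    thus False using Irr_dim_pos[OF i] by simp
  qed
  thus ?thesis using transpose_eq_smult_sign[OF P _ T] T by blast
qed

lemma sum_trace_square_self_dual:
  assumes i: "i \<in> I" and P: "P \<in> carrier_mat (d i) (d i)" and Q: "Q \<in> carrier_mat (d i) (d i)"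
    and PQ: "P * Q = 1\<^sub>m (d i)" "Q * P = 1\<^sub>m (d i)"
    and int: "\<And>h. P * \<rho> i h = contragredient dag (\<rho> i) h * P"
    and T: "transpose_mat P = \<epsilon> \<cdot>\<^sub>m P"
  shows "(\<Sum>b\<in>B. mat_trace (\<rho> i (b * b))) = c i * \<epsilon> * of_nat (d i)"
proof -
  let ?n = "d i"
  have "(\<Sum>l<?n. \<Sum>b\<in>B. \<rho> i b $$ (k,l) * \<rho> i b $$ (l,k)) = c i * \<epsilon>" if k: "k < ?n" for k
  proof -
    have "P $$ (k,l) = \<epsilon> * P $$ (l,k)" if "l < ?n" for l
      using arg_cong[OF T, of "\<lambda>M. M $$ (l,k)"] P k that by simp
    hence "(\<Sum>l<?n. \<Sum>b\<in>B. \<rho> i b $$ (k,l) * \<rho> i b $$ (l,k)) = (\<Sum>l<?n. c i * \<epsilon> * (Q $$ (k,l) * P $$ (l,k)))"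
      by (intro sum.cong refl) (simp add: sum_index_product_self_dual[OF i P Q PQ int k])
    also have "\<dots> = c i * \<epsilon> * (Q * P) $$ (k,k)"
      using P Q k by (simp add: scalar_prod_def sum_distrib_left atLeast0LessThan)
    finally show ?thesis unfolding PQ(2) using k by simp
  qed
  thus ?thesis unfolding sum_trace_square[OF Irr_rep[OF i]] by simp
qed

lemma nu_eq_of_invariant_form:
  assumes i: "i \<in> I" and M: "M \<in> carrier_mat (d i) (d i)"
    and nd: "nondegenerate_form (d i) M" and inv: "invariant_form dag (d i) (\<rho> i) M"
    and T: "transpose_mat M = e \<cdot>\<^sub>m M"
  shows "nu B (c i) (d i) (\<rho> i) = e"
proof -
  obtain Q where Q: "Q \<in> carrier_mat (d i) (d i)" "M * Q = 1\<^sub>m (d i)" "Q * M = 1\<^sub>m (d i)"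
    using inverse_mat_if_det_nonzero[OF M det_nonzero_if_nondegenerate_form[OF M nd]] by blast
  have "\<And>h. M * \<rho> i h = contragredient dag (\<rho> i) h * M"
    using inv invariant_form_iff_intertwiner[OF Irr_rep[OF i] M] by blast
  hence "(\<Sum>b\<in>B. mat_trace (\<rho> i (b * b))) = c i * e * of_nat (d i)"
    by (rule sum_trace_square_self_dual[OF i M Q(1) Q(2,3) _ T])
  thus ?thesis unfolding nu_def using schur_nz[OF i] Irr_dim_pos[OF i] by (simp add: field_simps)
qed

lemma self_dual_invariant_form:
  assumes i: "i \<in> I" and self_dual: "rep_iso (d i) (\<rho> i) (d i) (contragredient dag (\<rho> i))"
  obtains M e where "M \<in> carrier_mat (d i) (d i)" "nondegenerate_form (d i) M"
    "invariant_form dag (d i) (\<rho> i) M" "transpose_mat M = e \<cdot>\<^sub>m M" "e = 1 \<or> e = -1"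
proof -
  obtain P where P: "P \<in> carrier_mat (d i) (d i)" "invertible_mat P"
    and int: "\<And>h. P * \<rho> i h = contragredient dag (\<rho> i) h * P"
    using self_dual unfolding rep_iso_def by blast
  obtain Q where Q: "Q \<in> carrier_mat (d i) (d i)" "P * Q = 1\<^sub>m (d i)" "Q * P = 1\<^sub>m (d i)"
    using invertible_mat_inverse[OF P] by blast
  obtain e where "e = 1 \<or> e = -1" "transpose_mat P = e \<cdot>\<^sub>m P"
    using self_dual_intertwiner_sign[OF i P(1) Q(1) Q(2,3) int] by blast
  moreover have "invariant_form dag (d i) (\<rho> i) P"
    using invariant_form_iff_intertwiner[OF Irr_rep[OF i] P(1)] int by blast
  ultimately show ?thesis
    using that[OF P(1) nondegenerate_form_if_right_inverse[OF P(1) Q(1,2)]] by blast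
qed

lemma nu_eq_0_iff:
  assumes i: "i \<in> I"
  shows "nu B (c i) (d i) (\<rho> i) = 0 \<longleftrightarrow> \<not> rep_iso (d i) (\<rho> i) (d i) (contragredient dag (\<rho> i))"
proof
  assume "nu B (c i) (d i) (\<rho> i) = 0"
  thus "\<not> rep_iso (d i) (\<rho> i) (d i) (contragredient dag (\<rho> i))"
    using self_dual_invariant_form[OF i] nu_eq_of_invariant_form[OF i] by (metis zero_neq_one zero_neq_neg_one)
next
  assume "\<not> rep_iso (d i) (\<rho> i) (d i) (contragredient dag (\<rho> i))"
  thus "nu B (c i) (d i) (\<rho> i) = 0" using sum_trace_square_eq_0[OF i] unfolding nu_def by simp
qed

lemma nu_eq_sign_iff:
  assumes i: "i \<in> I" and "e \<noteq> 0"
  shows "nu B (c i) (d i) (\<rho> i) = e \<longleftrightarrow> (\<exists>M \<in> carrier_mat (d i) (d i). nondegenerate_form (d i) M \<and>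
           invariant_form dag (d i) (\<rho> i) M \<and> transpose_mat M = e \<cdot>\<^sub>m M)"
proof
  assume nu: "nu B (c i) (d i) (\<rho> i) = e"
  hence "rep_iso (d i) (\<rho> i) (d i) (contragredient dag (\<rho> i))" using nu_eq_0_iff[OF i] assms(2) by auto
  then obtain M e' where "M \<in> carrier_mat (d i) (d i)" "nondegenerate_form (d i) M"
    "invariant_form dag (d i) (\<rho> i) M" "transpose_mat M = e' \<cdot>\<^sub>m M"
    using self_dual_invariant_form[OF i] by metis
  moreover from this have "e' = e" using nu_eq_of_invariant_form[OF i] nu by metis
  ultimately show "\<exists>M \<in> carrier_mat (d i) (d i). nondegenerate_form (d i) M \<and>
      invariant_form dag (d i) (\<rho> i) M \<and> transpose_mat M = e \<cdot>\<^sub>m M" by blast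
qed (use nu_eq_of_invariant_form[OF i] in blast)

lemma nu_sign:
  assumes i: "i \<in> I"
  shows "nu B (c i) (d i) (\<rho> i) \<in> {0, 1, -1}"
  using nu_eq_0_iff[OF i] self_dual_invariant_form[OF i] nu_eq_of_invariant_form[OF i] by blast

lemma nu_eq_1_iff:
  assumes i: "i \<in> I"
  shows "nu B (c i) (d i) (\<rho> i) = 1 \<longleftrightarrow>
    rep_iso (d i) (\<rho> i) (d i) (contragredient dag (\<rho> i)) \<and> (\<exists>M \<in> carrier_mat (d i) (d i).
      nondegenerate_form (d i) M \<and> symmetric_form (d i) M \<and> invariant_form dag (d i) (\<rho> i) M)"
proof -
  have "(\<exists>M \<in> carrier_mat (d i) (d i). nondegenerate_form (d i) M \<and> symmetric_form (d i) M \<and>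
      invariant_form dag (d i) (\<rho> i) M) \<longleftrightarrow> (\<exists>M \<in> carrier_mat (d i) (d i).
      nondegenerate_form (d i) M \<and> invariant_form dag (d i) (\<rho> i) M \<and> transpose_mat M = 1 \<cdot>\<^sub>m M)"
    by (intro bex_cong refl) (auto simp: symmetric_form_iff_transpose smult_one_mat)
  thus ?thesis using nu_eq_sign_iff[OF i, of 1] nu_eq_0_iff[OF i] by auto
qed

lemma nu_eq_minus_1_iff:
  assumes i: "i \<in> I"
  shows "nu B (c i) (d i) (\<rho> i) = -1 \<longleftrightarrow>
    rep_iso (d i) (\<rho> i) (d i) (contragredient dag (\<rho> i)) \<and> (\<exists>M \<in> carrier_mat (d i) (d i).
      nondegenerate_form (d i) M \<and> alternating_form (d i) M \<and> invariant_form dag (d i) (\<rho> i) M)"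
proof -
  have "(\<exists>M \<in> carrier_mat (d i) (d i). nondegenerate_form (d i) M \<and> alternating_form (d i) M \<and>
      invariant_form dag (d i) (\<rho> i) M) \<longleftrightarrow> (\<exists>M \<in> carrier_mat (d i) (d i).
      nondegenerate_form (d i) M \<and> invariant_form dag (d i) (\<rho> i) M \<and> transpose_mat M = (-1) \<cdot>\<^sub>m M)"
    by (intro bex_cong refl) (auto simp: alternating_form_iff_transpose)
  thus ?thesis using nu_eq_sign_iff[OF i, of "-1"] nu_eq_0_iff[OF i] by auto
qed

end

text \<open>The right-hand sides of \<open>nu_eq_0_iff\<close> and \<open>nu_eq_sign_iff\<close> do not mention the basis.\<close>
lemma nu_independent_of_basis:
  assumes B0: "schur_setting sc \<tau> dag B0 I d \<rho> c"
    and B1: "\<And>B1. finite B1 \<Longrightarrow> dag_symmetric_basis sc \<tau> dag B1 \<Longrightarrow> schur_setting sc \<tau> dag B1 I d \<rho> c"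
    and i: "i \<in> I"
  shows "\<forall>B1. finite B1 \<and> dag_symmetric_basis sc \<tau> dag B1 \<longrightarrow>
    nu B1 (c i) (d i) (\<rho> i) = nu B0 (c i) (d i) (\<rho> i)"
proof (intro allI impI, elim conjE)
  fix B1 assume "finite B1" "dag_symmetric_basis sc \<tau> dag B1"
  interpret B0: schur_setting sc \<tau> dag B0 I d \<rho> c by (rule B0)
  interpret B1: schur_setting sc \<tau> dag B1 I d \<rho> c by (rule B1) fact+
  show "nu B1 (c i) (d i) (\<rho> i) = nu B0 (c i) (d i) (\<rho> i)"
  proof (cases "nu B0 (c i) (d i) (\<rho> i) = 0")
    case True
    thus ?thesis using B0.nu_eq_0_iff[OF i] B1.nu_eq_0_iff[OF i] by simp
  next
    case False
    thus ?thesis using B0.nu_eq_sign_iff[OF i False] B1.nu_eq_sign_iff[OF i False] by simp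
  qed
qed

theorem proposition2p5:
  fixes sc :: "'k::field_char_0 \<Rightarrow> 'h::ring_1 \<Rightarrow> 'h"
    and \<tau> :: "'h \<Rightarrow> 'k" and dag :: "'h \<Rightarrow> 'h" and B0 :: "'h set"
    and I :: "'i set" and d :: "'i \<Rightarrow> nat" and \<rho> :: "'i \<Rightarrow> 'h \<Rightarrow> 'k mat"
    and c :: "'i \<Rightarrow> 'k" and i :: 'i
  assumes alg: "is_K_algebra sc"
    and ss: "semisimple_alg sc" and split: "split_alg sc"
    and sym: "symmetrizing_trace sc \<tau>"
    and dag: "anti_involution sc dag"
    and B0: "finite B0" "dag_symmetric_basis sc \<tau> dag B0"
    and Irr_simple: "\<And>j. j \<in> I \<Longrightarrow> simple_rep sc (d j) (\<rho> j)"
    and Irr_distinct: "\<And>j k. j \<in> I \<Longrightarrow> k \<in> I \<Longrightarrow> j \<noteq> k \<Longrightarrow> \<not> rep_iso (d j) (\<rho> j) (d k) (\<rho> k)"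
    and Irr_complete: "\<And>n \<sigma>. simple_rep sc n \<sigma> \<Longrightarrow> \<exists>j\<in>I. rep_iso n \<sigma> (d j) (\<rho> j)"
    and Irr_finite: "finite I"
    and schur_nz: "\<And>j. j \<in> I \<Longrightarrow> c j \<noteq> 0"
    and schur: "\<And>h. \<tau> h = (\<Sum>j\<in>I. mat_trace (\<rho> j h) / c j)"
    and i: "i \<in> I"
  shows "nu B0 (c i) (d i) (\<rho> i) \<in> {0, 1, -1}
    \<and> (nu B0 (c i) (d i) (\<rho> i) = 0 \<longleftrightarrow>
         \<not> rep_iso (d i) (\<rho> i) (d i) (contragredient dag (\<rho> i)))
    \<and> (nu B0 (c i) (d i) (\<rho> i) = 1 \<longleftrightarrow>
         rep_iso (d i) (\<rho> i) (d i) (contragredient dag (\<rho> i)) \<and>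
         (\<exists>M \<in> carrier_mat (d i) (d i). nondegenerate_form (d i) M \<and>
            symmetric_form (d i) M \<and> invariant_form dag (d i) (\<rho> i) M))
    \<and> (nu B0 (c i) (d i) (\<rho> i) = -1 \<longleftrightarrow>
         rep_iso (d i) (\<rho> i) (d i) (contragredient dag (\<rho> i)) \<and>
         (\<exists>M \<in> carrier_mat (d i) (d i). nondegenerate_form (d i) M \<and>
            alternating_form (d i) M \<and> invariant_form dag (d i) (\<rho> i) M))
    \<and> (\<forall>B1. finite B1 \<and> dag_symmetric_basis sc \<tau> dag B1 \<longrightarrow>
         nu B1 (c i) (d i) (\<rho> i) = nu B0 (c i) (d i) (\<rho> i))"
proof -
  have setting: "schur_setting sc \<tau> dag B I d \<rho> c" if "finite B" "dag_symmetric_basis sc \<tau> dag B" for B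
    unfolding schur_setting_def dag_symmetric_algebra_def schur_setting_axioms_def
    using that alg split sym dag Irr_simple Irr_distinct Irr_finite schur_nz schur by blast
  interpret schur_setting sc \<tau> dag B0 I d \<rho> c by (rule setting[OF B0])
  show ?thesis
    using nu_sign[OF i] nu_eq_0_iff[OF i] nu_eq_1_iff[OF i] nu_eq_minus_1_iff[OF i]
      nu_independent_of_basis[OF setting[OF B0] setting i] by blast
qed

end
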